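(* Let $\beta_0,n,\delta,r,k>0$. Let $\mathcal{B}_+$ be the set of continuous functions $\phi:[-r,0]\to[0,\infty)$. Define $G(u)=\int_0^u\frac{2s}{1+s^n}\,ds$ for $u\ge0$, and $$V(\phi)=G(\phi(0))+k\beta_0\int_{-r}^{0}\frac{\phi(s)^2}{(1+\phi(s)^n)^2}\,ds,\qquad \phi\in\mathcal{B}_+.$$ For $\phi\in\mathcal{B}_+$ let $x(\cdot,\phi)$ denote the solution of $$\dot{x}(t)=-\Big[\frac{\beta_0}{1+x(t)^n}+\delta\Big]x(t)+k\,\frac{\beta_0\,x(t-r)}{1+x(t-r)^n}$$ with $x(s,\phi)=\phi(s)$ on $[-r,0]$, let $x_h(\phi)\in\mathcal{B}_+$ be $x_h(\phi)(s)=x(h+s,\phi)$, and set $\dot V(\phi)=\limsup_{h\to0^+}\frac1h[V(x_h(\phi))-V(\phi)]$. Then for every $\phi\in\mathcal{B}_+$, $$\dot V(\phi)\le 2(k\beta_0-\beta_0-\delta)\,\frac{\phi(0)^2}{(1+\phi(0)^n)^2}.$$ In particular, if $k\beta_0=\beta_0+\delta$, then $\dot V(\phi)\le 0$ for all $\phi\in\mathcal{B}_+$.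
   Context: The solution $x(\cdot,\phi)$ exists on $[-r,\infty)$, is unique and nonnegative for nonnegative continuous initial data. *)

theory Defs
  imports "HOL-Analysis.Analysis"
begin

definition G :: "real \<Rightarrow> real \<Rightarrow> real" where
  "G n u = integral {0..u} (\<lambda>s. 2 * s / (1 + s powr n))"

definition V :: "real \<Rightarrow> real \<Rightarrow> real \<Rightarrow> real \<Rightarrow> (real \<Rightarrow> real) \<Rightarrow> real" where
  "V beta0 n r k phi = G n (phi 0) +
     k * beta0 * integral {-r..0} (\<lambda>s. (phi s)\<^sup>2 / (1 + (phi s) powr n)\<^sup>2)"

definition Bplus :: "real \<Rightarrow> (real \<Rightarrow> real) set" where
  "Bplus r = {phi. continuous_on {-r..0} phi \<and> (\<forall>s\<in>{-r..0}. phi s \<ge> 0)}"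

definition is_solution ::
  "real \<Rightarrow> real \<Rightarrow> real \<Rightarrow> real \<Rightarrow> real \<Rightarrow> (real \<Rightarrow> real) \<Rightarrow> (real \<Rightarrow> real) \<Rightarrow> bool" where
  "is_solution beta0 n delta r k phi x \<longleftrightarrow>
     (\<forall>s\<in>{-r..0}. x s = phi s) \<and>
     continuous_on {-r..} x \<and>
     (\<forall>t\<ge>-r. x t \<ge> 0) \<and>
     (\<forall>t\<ge>0. (x has_real_derivative
         (- (beta0 / (1 + x t powr n) + delta) * x t
          + k * (beta0 * x (t - r) / (1 + x (t - r) powr n)))) (at t within {0..}))"

definition seg :: "(real \<Rightarrow> real) \<Rightarrow> real \<Rightarrow> real \<Rightarrow> real" where
  "seg x h = (\<lambda>s. x (h + s))"

end

theory Submission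
  imports Defs
begin

(* Along the solution, V splits into two parts whose right derivatives at h = 0
   are computed separately:
     G(x(h)), differentiated by the chain rule with G'(u) = 2u/(1+u^n), and
     the window integral  int_{-r}^0 f(x(h+s)) ds = int_{h-r}^h f(x(s)) ds  with
     f(u) = u^2/(1+u^n)^2, whose derivative is f(x(h)) - f(x(h-r)).
   Hence h |-> V(x_h) has a right derivative D at 0, so the Limsup of the difference
   quotients equals D.  Writing a = x(0)/(1+x(0)^n) and b = x(-r)/(1+x(-r)^n), D is bounded
   by the stated quantity via the elementary inequalities 2ab - b^2 <= a^2 and a x(0) >= a^2.
   The file first proves the calculus facts (derivative of an integral over a ray, of G, of a
   sliding window integral, of a right difference quotient's Limsup), then the pointwise
   algebraic bound, then the right derivative of V along a solution, and finally the theorem. *)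

lemma integral_ray_has_real_derivative:
  fixes g :: "real \<Rightarrow> real"
  assumes "continuous_on {a..} g" "u \<ge> a"
  shows "((\<lambda>t. integral {a..t} g) has_real_derivative g u) (at u within {a..})"
proof -
  have "continuous_on {a..u+1} g" using assms(1) by (rule continuous_on_subset) auto
  then have "((\<lambda>t. integral {a..t} g) has_vector_derivative g u) (at u within {a..u+1})"
    using integral_has_vector_derivative[OF \<open>continuous_on {a..u+1} g\<close>] assms(2) by auto
  then have deriv: "((\<lambda>t. integral {a..t} g) has_real_derivative g u) (at u within {a..u+1})"
    by (simp add: has_real_derivative_iff_has_vector_derivative)
  have "at u within {a..u+1} = at u within {a..}"
    by (rule at_within_nhd[of _ "{..<u+1}"]) auto
  with deriv show ?thesis by simp
qed

lemma continuous_on_G_integrand: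
  assumes "n > 0"
  shows "continuous_on {0..} (\<lambda>s::real. 2 * s / (1 + s powr n))"
    and "continuous_on {0..} (\<lambda>u::real. u\<^sup>2 / (1 + u powr n)\<^sup>2)"
proof -
  have powr: "continuous_on {0..} (\<lambda>u::real. u powr n)"
    using assms by (intro continuous_on_powr') (auto intro: continuous_intros)
  have nonzero: "1 + u powr n \<noteq> 0" for u :: real
    by (smt (verit) powr_ge_zero)
  show "continuous_on {0..} (\<lambda>s::real. 2 * s / (1 + s powr n))"
    and "continuous_on {0..} (\<lambda>u::real. u\<^sup>2 / (1 + u powr n)\<^sup>2)"
    using nonzero by (auto intro!: continuous_intros powr)
qed

lemma G_has_real_derivative:
  assumes "n > 0" "u \<ge> 0"
  shows "(G n has_real_derivative 2 * u / (1 + u powr n)) (at u within {0..})"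
  unfolding G_def[abs_def]
  using integral_ray_has_real_derivative[OF continuous_on_G_integrand(1)[OF assms(1)] assms(2)]
  by simp

text \<open>A window integral of width r over the shifted segment is a difference of two running
  integrals; this turns the delay part of V into a differentiable function of h.\<close>
lemma window_integral_eq:
  fixes f :: "real \<Rightarrow> real"
  assumes "continuous_on {-r..} f" "r \<ge> 0" "h \<ge> 0"
  shows "integral {-r..0} (\<lambda>s. f (h + s)) = integral {-r..h} f - integral {-r..h-r} f"
proof -
  have "f integrable_on {-r..h}"
    by (rule integrable_continuous_real, rule continuous_on_subset[OF assms(1)]) auto
  then have "integral {-r..h-r} f + integral {h-r..h} f = integral {-r..h} f"
    using assms by (intro Henstock_Kurzweil_Integration.integral_combine) auto
  moreover have "integral {h-r..h} f = integral {-r..0} (\<lambda>s. f (h + s))"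
    using integral_shift_real_ivl[of "h-r" h h f] by (simp add: add.commute)
  ultimately show ?thesis by simp
qed

lemma window_integral_has_real_derivative:
  fixes f :: "real \<Rightarrow> real"
  assumes "continuous_on {-r..} f" "r \<ge> 0"
  shows "((\<lambda>h. integral {-r..h} f - integral {-r..h-r} f) has_real_derivative f 0 - f (-r))
           (at 0 within {0..})"
proof -
  let ?J = "\<lambda>t. integral {-r..t} f"
  have leading: "(?J has_real_derivative f 0) (at 0 within {0..})"
    using DERIV_subset[OF integral_ray_has_real_derivative[OF assms(1), of 0]] assms(2) by auto
  have "(\<lambda>h. h - r) ` {0..} \<subseteq> {-r..}" by auto
  then have outer: "(?J has_real_derivative f (-r)) (at ((\<lambda>h. h - r) 0) within ((\<lambda>h. h - r) ` {0..}))"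
    using DERIV_subset[OF integral_ray_has_real_derivative[OF assms(1), of "-r"]] by auto
  have inner: "((\<lambda>h::real. h - r) has_real_derivative 1) (at 0 within {0..})"
    by (auto intro!: derivative_eq_intros)
  have trailing: "((\<lambda>h. ?J (h - r)) has_real_derivative f (-r)) (at 0 within {0..})"
    using DERIV_image_chain[OF outer inner] by (simp add: comp_def)
  show ?thesis using DERIV_diff[OF leading trailing] by simp
qed

lemma Limsup_right_quotient_eq:
  fixes F :: "real \<Rightarrow> real"
  assumes "(F has_real_derivative D) (at 0 within {0..})"
  shows "Limsup (at_right 0) (\<lambda>h. ereal ((F h - F 0) / h)) = ereal D"
proof -
  have "((\<lambda>h. (F h - F 0) / h) \<longlongrightarrow> D) (at 0 within {0..})"
    using assms by (simp add: has_field_derivative_iff)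
  then have "((\<lambda>h. (F h - F 0) / h) \<longlongrightarrow> D) (at_right 0)"
    by (rule tendsto_within_subset) auto
  then show ?thesis by (intro lim_imp_Limsup) (auto intro: tendsto_ereal)
qed

text \<open>Pointwise form of the estimate for the right derivative of V, with p0, pr standing for
  the powers x(0)^n, x(-r)^n (only p0 needs a sign).  With a = x0/(1+p0), b = xr/(1+pr) the left side equals
  -2 b0 a^2 - 2 d a x0 + k b0 (2ab + a^2 - b^2); use 2ab - b^2 \<le> a^2 and a x0 \<ge> a^2.\<close>
lemma derivative_estimate:
  fixes b0 d k x0 xr p0 pr :: real
  assumes "b0 > 0" "d > 0" "k > 0" "p0 \<ge> 0" "x0 \<ge> 0"
  shows "2 * x0 / (1 + p0) * (- (b0 / (1 + p0) + d) * x0 + k * (b0 * xr / (1 + pr)))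
         + k * b0 * (x0\<^sup>2 / (1 + p0)\<^sup>2 - xr\<^sup>2 / (1 + pr)\<^sup>2)
       \<le> 2 * (k * b0 - b0 - d) * x0\<^sup>2 / (1 + p0)\<^sup>2"
proof -
  define a where "a = x0 / (1 + p0)"
  define b where "b = xr / (1 + pr)"
  have squares: "x0\<^sup>2 / (1 + p0)\<^sup>2 = a\<^sup>2" "xr\<^sup>2 / (1 + pr)\<^sup>2 = b\<^sup>2"
    unfolding a_def b_def by (simp_all add: power_divide)
  have lhs: "2 * x0 / (1 + p0) * (- (b0 / (1 + p0) + d) * x0 + k * (b0 * xr / (1 + pr)))
               + k * b0 * (a\<^sup>2 - b\<^sup>2)
             = - 2 * b0 * a\<^sup>2 - 2 * d * (a * x0) + k * b0 * (2 * a * b + a\<^sup>2 - b\<^sup>2)"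
  proof -
    have "2 * x0 / (1 + p0) = 2 * a" "(b0 / (1 + p0) + d) * x0 = b0 * a + d * x0"
         "b0 * xr / (1 + pr) = b0 * b"
      unfolding a_def b_def by (simp_all add: algebra_simps)
    then show ?thesis by (simp add: algebra_simps power2_eq_square)
  qed
  have "2 * a * b - b\<^sup>2 \<le> a\<^sup>2" by (smt (verit) sum_squares_bound)
  then have cross: "k * b0 * (2 * a * b + a\<^sup>2 - b\<^sup>2) \<le> k * b0 * (2 * a\<^sup>2)"
    using assms by (intro mult_left_mono) auto
  have "0 \<le> a" "a \<le> x0"
    using assms unfolding a_def by (auto simp: divide_le_eq mult_le_cancel_left1)
  then have "a\<^sup>2 \<le> a * x0" by (simp add: power2_eq_square mult_left_mono)
  then have "d * a\<^sup>2 \<le> d * (a * x0)" using assms(2) by simp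
  moreover have "2 * (k * b0 - b0 - d) * x0\<^sup>2 / (1 + p0)\<^sup>2 = 2 * (k * b0 - b0 - d) * a\<^sup>2"
    using squares(1) by (metis times_divide_eq_right)
  ultimately show ?thesis
    using cross unfolding squares lhs by (simp add: algebra_simps)
qed

lemma V_along_solution_has_real_derivative:
  fixes beta0 n delta r k :: real and phi x :: "real \<Rightarrow> real"
  assumes "n > 0" "r > 0" "is_solution beta0 n delta r k phi x"
  defines "f \<equiv> \<lambda>u::real. u\<^sup>2 / (1 + u powr n)\<^sup>2"
  shows "((\<lambda>h. V beta0 n r k (seg x h)) has_real_derivative
            2 * x 0 / (1 + x 0 powr n) *
              (- (beta0 / (1 + x 0 powr n) + delta) * x 0
               + k * (beta0 * x (-r) / (1 + x (-r) powr n)))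
          + k * beta0 * (f (x 0) - f (x (-r)))) (at 0 within {0..})"
proof -
  note sol = assms(3)[unfolded is_solution_def]
  have x_nonneg: "\<And>t. t \<ge> -r \<Longrightarrow> x t \<ge> 0" using sol by blast
  have fx_cont: "continuous_on {-r..} (\<lambda>t. f (x t))"
    unfolding f_def using sol x_nonneg
    by (intro continuous_on_compose2[OF continuous_on_G_integrand(2)[OF assms(1)]]) auto
  have x_deriv: "(x has_real_derivative
      - (beta0 / (1 + x 0 powr n) + delta) * x 0 + k * (beta0 * x (-r) / (1 + x (-r) powr n)))
      (at 0 within {0..})"
    using sol by auto
  have "x ` {0..} \<subseteq> {0..}" using x_nonneg assms(2) by force
  then have G_part: "((\<lambda>h. G n (x h)) has_real_derivative 2 * x 0 / (1 + x 0 powr n) *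
      (- (beta0 / (1 + x 0 powr n) + delta) * x 0 + k * (beta0 * x (-r) / (1 + x (-r) powr n))))
      (at 0 within {0..})"
    using DERIV_image_chain[OF DERIV_subset[OF G_has_real_derivative] x_deriv] x_nonneg[of 0]
      assms(1,2) unfolding comp_def by auto
  have window_part: "((\<lambda>h. k * beta0 * (integral {-r..h} (\<lambda>t. f (x t))
        - integral {-r..h-r} (\<lambda>t. f (x t)))) has_real_derivative
        k * beta0 * (f (x 0) - f (x (-r)))) (at 0 within {0..})"
    using window_integral_has_real_derivative[OF fx_cont] assms(2) by (auto intro: DERIV_cmult)
  have V_eq: "V beta0 n r k (seg x h) = G n (x h) + k * beta0 *
      (integral {-r..h} (\<lambda>t. f (x t)) - integral {-r..h-r} (\<lambda>t. f (x t)))" if "h \<ge> 0" for h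
    using window_integral_eq[OF fx_cont _ that] assms(2)
    unfolding V_def seg_def f_def by simp
  show ?thesis
    by (rule has_field_derivative_transform_within[OF DERIV_add[OF G_part window_part], of 1])
       (auto simp: V_eq)
qed

lemma V_initial_segment:
  assumes "is_solution beta0 n delta r k phi x" "r > 0"
  shows "V beta0 n r k (seg x 0) = V beta0 n r k phi"
proof -
  have agree: "\<forall>s\<in>{-r..0}. x s = phi s" using assms(1) unfolding is_solution_def by blast
  then have "integral {-r..0} (\<lambda>s. (seg x 0 s)\<^sup>2 / (1 + seg x 0 s powr n)\<^sup>2)
           = integral {-r..0} (\<lambda>s. (phi s)\<^sup>2 / (1 + phi s powr n)\<^sup>2)"
    by (intro integral_cong) (auto simp: seg_def)
  moreover have "x 0 = phi 0" using agree assms(2) by auto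
  ultimately show ?thesis unfolding V_def by (simp add: seg_def)
qed

theorem mainTheorem3:
  fixes beta0 n delta r k :: real and phi x :: "real \<Rightarrow> real"
  assumes "beta0 > 0" "n > 0" "delta > 0" "r > 0" "k > 0"
    and "phi \<in> Bplus r"
    and "is_solution beta0 n delta r k phi x"
  shows "Limsup (at_right 0)
           (\<lambda>h. ereal ((V beta0 n r k (seg x h) - V beta0 n r k phi) / h))
         \<le> ereal (2 * (k * beta0 - beta0 - delta) * (phi 0)\<^sup>2 / (1 + phi 0 powr n)\<^sup>2)
    \<and> (k * beta0 = beta0 + delta \<longrightarrow>
         Limsup (at_right 0)
           (\<lambda>h. ereal ((V beta0 n r k (seg x h) - V beta0 n r k phi) / h)) \<le> 0)"
proof -
  note sol = assms(7)[unfolded is_solution_def]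
  have x0: "x 0 = phi 0" using sol assms(4) by auto
  have x_nonneg: "x 0 \<ge> 0" using x0 assms(4,6) unfolding Bplus_def by auto
  define D where "D = 2 * x 0 / (1 + x 0 powr n) *
      (- (beta0 / (1 + x 0 powr n) + delta) * x 0 + k * (beta0 * x (-r) / (1 + x (-r) powr n)))
    + k * beta0 * ((x 0)\<^sup>2 / (1 + x 0 powr n)\<^sup>2 - (x (-r))\<^sup>2 / (1 + x (-r) powr n)\<^sup>2)"
  have "((\<lambda>h. V beta0 n r k (seg x h)) has_real_derivative D) (at 0 within {0..})"
    using V_along_solution_has_real_derivative[OF assms(2,4,7)] unfolding D_def by simp
  from Limsup_right_quotient_eq[OF this]
  have limsup: "Limsup (at_right 0)
      (\<lambda>h. ereal ((V beta0 n r k (seg x h) - V beta0 n r k phi) / h)) = ereal D"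
    using V_initial_segment[OF assms(7,4)] by simp
  have "D \<le> 2 * (k * beta0 - beta0 - delta) * (phi 0)\<^sup>2 / (1 + phi 0 powr n)\<^sup>2"
    unfolding D_def x0[symmetric] using assms(1,3,5) x_nonneg
    by (intro derivative_estimate) auto
  with limsup show ?thesis by auto
qed

end
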